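(* For all $k,l,m,n,u,v\in\mathbb N$ and all closed terms $P:(k,l)$, $Q:(l,m)$, $R:(m,n)$, $S:(n,u)$, $T:(u,v)$: (i) $(P\mathrel{;}Q)\mathrel{;}R\sim P\mathrel{;}(Q\mathrel{;}R)$; (ii) $P\mathrel{;}\mathsf I_l\sim P\sim \mathsf I_k\mathrel{;}P$; (iii) $(P\otimes R)\otimes T\sim P\otimes(R\otimes T)$; (iv) $(P\otimes S)\mathrel{;}(Q\otimes T)\sim (P\mathrel{;}Q)\otimes(S\mathrel{;}T)$; (v) $(P\otimes R)\mathrel{;}\mathsf X_{l,n}\sim \mathsf X_{k,m}\mathrel{;}(R\otimes P)$; (vi) $\mathsf X_{k,l}\mathrel{;}\mathsf X_{l,k}\sim\mathsf I_{k+l}$. (Each equation is asserted whenever both sides are well-sorted terms.)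
   Context: Wire calculus. Fix a set $\Sigma$ of signals and $\iota\notin\Sigma$; $L=\Sigma\cup\{\iota\}$; $\vec\iota$ denotes a word of $\iota$'s. Prefix strings are words over atoms: signal variables $x$, binders $\lambda x$, $\iota$, constants $\sigma\in\Sigma$. Terms: $P::= Y \mid P\mathrel{;}P\mid P\otimes P\mid \frac{u}{v}.P\mid P+P\mid \mu Y{:}\tau.P$ ($Y$ process variables, $\tau$ a sort $(k,l)$). In $\frac{u}{v}.P$, variables $x$ with $\lambda x$ in $uv$ are bound (set $bd$). Sorting: $Y$ has its declared sort; $P:(k,n),R:(n,l)\Rightarrow P\mathrel{;}R:(k,l)$; $P:(k,l),Q:(m,n)\Rightarrow P\otimes Q:(k+m,l+n)$; $\mu Y{:}\tau'.P:\tau$ if $P:\tau$ assuming $Y{:}\tau'$; $\frac{u}{v}.P:(k,l)$ if $|u|=k,|v|=l$, free variables of $uv$ are in context and disjoint from $bd$, and $P:(k,l)$ with $bd$ added to the context; $P,Q:\tau\Rightarrow P+Q:\tau$. Closed terms only, up to renaming of bound variables; $\otimes$ binds tighter than $;$. Transitions $P\xrightarrow[\vec b]{\vec a}Q$ are generated by: (Refl) $P\xrightarrow[\vec\iota]{\vec\iota}P$; ($\iota$L) $P\xrightarrow[\vec\iota]{\vec\iota}R\xrightarrow[\vec b]{\vec a}Q$ gives $P\xrightarrow[\vec b]{\vec a}Q$; ($\iota$R) $P\xrightarrow[\vec b]{\vec a}R\xrightarrow[\vec\iota]{\vec\iota}Q$ gives $P\xrightarrow[\vec b]{\vec a}Q$;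 (Cut) $P\xrightarrow[\vec c]{\vec a}Q$, $R\xrightarrow[\vec b]{\vec c}S$ give $P\mathrel{;}R\xrightarrow[\vec b]{\vec a}Q\mathrel{;}S$; (Ten) $P\xrightarrow[\vec b]{\vec a}Q$, $R\xrightarrow[\vec d]{\vec c}S$ give $P\otimes R\xrightarrow[\vec b\vec d]{\vec a\vec c}Q\otimes S$; (Pref) for each $\sigma:bd\to L$, $\frac{u}{v}.P\xrightarrow[v|_\sigma]{u|_\sigma}P|_\sigma$ ($\lambda x\mapsto\sigma(x)$ in labels, $x\mapsto\sigma(x)$ in $P$); (Rec) $P[\mu Y.P/Y]\xrightarrow[\vec b]{\vec a}Q$ gives $\mu Y.P\xrightarrow[\vec b]{\vec a}Q$; ($+\iota$) $P\xrightarrow[\vec\iota]{\vec\iota}Q$, $R\xrightarrow[\vec\iota]{\vec\iota}S$ give $P+R\xrightarrow[\vec\iota]{\vec\iota}Q+S$; ($+$L/R) $P\xrightarrow[\vec b]{\vec a}Q$ with $\vec a\vec b$ not all $\iota$ gives $P+R\xrightarrow[\vec b]{\vec a}Q$ and $R+P\xrightarrow[\vec b]{\vec a}Q$. Bisimilarity $\sim$: $P\sim Q$ (same sort) iff some relation $S\ni(P,Q)$ satisfies: if $(P',Q')\in S$ and $P'\xrightarrow[\vec b]{\vec a}P''$ then $Q'\xrightarrow[\vec b]{\vec a}Q''$ for some $Q''$ with $(P'',Q'')\in S$, and symmetrically. Constants: $\mathsf I_k=\mu Y.\frac{\lambda x_1\cdots\lambda x_k}{\lambda x_1\cdots\lambda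 x_k}.Y:(k,k)$ and $\mathsf X_{k,l}=\mu Y.\frac{\lambda x_1\cdots\lambda x_k\lambda y_1\cdots\lambda y_l}{\lambda y_1\cdots\lambda y_l\lambda x_1\cdots\lambda x_k}.Y:(k+l,l+k)$. *)

theory Defs
  imports Main
begin

text \<open>Signals are elements of a type 'a (the set Sigma);
  the label set L = Sigma + {iota} is represented by 'a option, with None = iota.\<close>

type_synonym svar = nat
type_synonym pvar = nat
type_synonym sort = "nat \<times> nat"
type_synonym 'a lab = "'a option"

datatype 'a atom = AVar svar | ABind svar | AIota | AConst 'a

datatype 'a trm =
    PVar pvar
  | Seq "'a trm" "'a trm"
  | Ten "'a trm" "'a trm"
  | Pref "'a atom list" "'a atom list" "'a trm"
  | Plus "'a trm" "'a trm"
  | Mu pvar sort "'a trm"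

definition bd :: "'a atom list \<Rightarrow> 'a atom list \<Rightarrow> svar set" where
  "bd u v = {x. ABind x \<in> set (u @ v)}"

definition fvp :: "'a atom list \<Rightarrow> 'a atom list \<Rightarrow> svar set" where
  "fvp u v = {x. AVar x \<in> set (u @ v)}"

inductive wsort :: "(pvar \<Rightarrow> sort option) \<Rightarrow> svar set \<Rightarrow> 'a trm \<Rightarrow> sort \<Rightarrow> bool" where
  wsVar: "D Y = Some t \<Longrightarrow> wsort D G (PVar Y) t"
| wsSeq: "wsort D G P (k, n) \<Longrightarrow> wsort D G R (n, l) \<Longrightarrow> wsort D G (Seq P R) (k, l)"
| wsTen: "wsort D G P (k, l) \<Longrightarrow> wsort D G Q (m, n) \<Longrightarrow> wsort D G (Ten P Q) (k + m, l + n)"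
| wsMu: "wsort (D(Y := Some t)) G P t \<Longrightarrow> wsort D G (Mu Y t P) t"
| wsPref: "length u = k \<Longrightarrow> length v = l \<Longrightarrow> fvp u v \<subseteq> G \<Longrightarrow> fvp u v \<inter> bd u v = {}
     \<Longrightarrow> wsort D (G \<union> bd u v) P (k, l) \<Longrightarrow> wsort D G (Pref u v P) (k, l)"
| wsPlus: "wsort D G P t \<Longrightarrow> wsort D G Q t \<Longrightarrow> wsort D G (Plus P Q) t"

definition closed_sort :: "'a trm \<Rightarrow> sort \<Rightarrow> bool" where
  "closed_sort P t = wsort Map.empty {} P t"

text \<open>Substitution of a closed term for a process variable.\<close>
fun psubst :: "'a trm \<Rightarrow> pvar \<Rightarrow> 'a trm \<Rightarrow> 'a trm" where
  "psubst (PVar Z) Y R = (if Z = Y then R else PVar Z)"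
| "psubst (Seq P Q) Y R = Seq (psubst P Y R) (psubst Q Y R)"
| "psubst (Ten P Q) Y R = Ten (psubst P Y R) (psubst Q Y R)"
| "psubst (Pref u v P) Y R = Pref u v (psubst P Y R)"
| "psubst (Plus P Q) Y R = Plus (psubst P Y R) (psubst Q Y R)"
| "psubst (Mu Z t P) Y R = (if Z = Y then Mu Z t P else Mu Z t (psubst P Y R))"

fun atom_of_lab :: "'a lab \<Rightarrow> 'a atom" where
  "atom_of_lab None = AIota"
| "atom_of_lab (Some c) = AConst c"

fun satom :: "svar set \<Rightarrow> (svar \<Rightarrow> 'a lab) \<Rightarrow> 'a atom \<Rightarrow> 'a atom" where
  "satom B s (AVar x) = (if x \<in> B then atom_of_lab (s x) else AVar x)"
| "satom B s a = a"

fun ssubst :: "svar set \<Rightarrow> (svar \<Rightarrow> 'a lab) \<Rightarrow> 'a trm \<Rightarrow> 'a trm" where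
  "ssubst B s (PVar Z) = PVar Z"
| "ssubst B s (Seq P Q) = Seq (ssubst B s P) (ssubst B s Q)"
| "ssubst B s (Ten P Q) = Ten (ssubst B s P) (ssubst B s Q)"
| "ssubst B s (Pref u v P) =
     Pref (map (satom B s) u) (map (satom B s) v) (ssubst (B - bd u v) s P)"
| "ssubst B s (Plus P Q) = Plus (ssubst B s P) (ssubst B s Q)"
| "ssubst B s (Mu Z t P) = Mu Z t (ssubst B s P)"

fun lab_of :: "(svar \<Rightarrow> 'a lab) \<Rightarrow> 'a atom \<Rightarrow> 'a lab" where
  "lab_of s (ABind x) = s x"
| "lab_of s AIota = None"
| "lab_of s (AConst c) = Some c"
| "lab_of s (AVar x) = None"

definition all_iota :: "'a lab list \<Rightarrow> bool" where
  "all_iota w = (\<forall>z \<in> set w. z = None)"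

text \<open>Transitions  P --a/b--> Q  (a: upper/left label, b: lower/right label).\<close>
inductive trans :: "'a trm \<Rightarrow> 'a lab list \<Rightarrow> 'a lab list \<Rightarrow> 'a trm \<Rightarrow> bool" where
  tRefl: "closed_sort P (k, l) \<Longrightarrow> trans P (replicate k None) (replicate l None) P"
| tIotaL: "trans P a0 b0 R \<Longrightarrow> all_iota a0 \<Longrightarrow> all_iota b0 \<Longrightarrow> trans R a b Q \<Longrightarrow> trans P a b Q"
| tIotaR: "trans P a b R \<Longrightarrow> trans R a0 b0 Q \<Longrightarrow> all_iota a0 \<Longrightarrow> all_iota b0 \<Longrightarrow> trans P a b Q"
| tCut: "trans P a c Q \<Longrightarrow> trans R c b S \<Longrightarrow> trans (Seq P R) a b (Seq Q S)"
| tTen: "trans P a b Q \<Longrightarrow> trans R c d S \<Longrightarrow> trans (Ten P R) (a @ c) (b @ d) (Ten Q S)"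
| tPref: "fvp u v = {} \<Longrightarrow>
     trans (Pref u v P) (map (lab_of s) u) (map (lab_of s) v) (ssubst (bd u v) s P)"
| tRec: "trans (psubst P Y (Mu Y t P)) a b Q \<Longrightarrow> trans (Mu Y t P) a b Q"
| tPlusIota: "trans P a b Q \<Longrightarrow> all_iota a \<Longrightarrow> all_iota b \<Longrightarrow>
     trans R a b S \<Longrightarrow> trans (Plus P R) a b (Plus Q S)"
| tPlusL: "trans P a b Q \<Longrightarrow> \<not> all_iota (a @ b) \<Longrightarrow> trans (Plus P R) a b Q"
| tPlusR: "trans P a b Q \<Longrightarrow> \<not> all_iota (a @ b) \<Longrightarrow> trans (Plus R P) a b Q"

definition is_bisim :: "('a trm \<times> 'a trm) set \<Rightarrow> bool" where
  "is_bisim Rel = (\<forall>(P, Q) \<in> Rel.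
      (\<forall>a b P'. trans P a b P' \<longrightarrow> (\<exists>Q'. trans Q a b Q' \<and> (P', Q') \<in> Rel)) \<and>
      (\<forall>a b Q'. trans Q a b Q' \<longrightarrow> (\<exists>P'. trans P a b P' \<and> (P', Q') \<in> Rel)))"

definition bisimilar :: "'a trm \<Rightarrow> 'a trm \<Rightarrow> bool" (infix "\<approx>" 50) where
  "P \<approx> Q = ((\<exists>t. closed_sort P t \<and> closed_sort Q t) \<and> (\<exists>Rel. is_bisim Rel \<and> (P, Q) \<in> Rel))"

text \<open>Constants I_k and X_{k,l}; x_i are the variables 0..k-1, y_j are k..k+l-1.\<close>
definition Id_k :: "nat \<Rightarrow> 'a trm" where
  "Id_k k = Mu 0 (k, k) (Pref (map ABind [0..<k]) (map ABind [0..<k]) (PVar 0))"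

definition Tw :: "nat \<Rightarrow> nat \<Rightarrow> 'a trm" where
  "Tw k l = Mu 0 (k + l, l + k)
     (Pref (map ABind ([0..<k] @ [k..<k + l])) (map ABind ([k..<k + l] @ [0..<k])) (PVar 0))"

end

theory Submission
  imports Defs
begin

text \<open>Each law is witnessed by the relation pairing the two sides for all well-sorted components.
  Transitions of \<open>;\<close>- and \<open>\<otimes>\<close>-terms are generated by (Cut) and (Ten) up to the closure under
  idle steps, so it suffices to match these generating steps; a (Cut) or (Ten) step of one side is
  rearranged into a step of the other, componentwise for \<open>\<otimes>\<close>, and by induction on the derivation
  of the inner step when a component is itself a \<open>;\<close>-term. The wires \<open>I\<close> and \<open>X\<close> have just two
  reachable states, the recursive term and its unfolding, and every step copies (respectively swaps
  the two blocks of) its input to its output.\<close>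

section \<open>Sorting and subject reduction\<close>

inductive_cases wsort_PVarE: "wsort D G (PVar Y) t"
inductive_cases wsort_SeqE: "wsort D G (Seq P R) t"
inductive_cases wsort_TenE: "wsort D G (Ten P R) t"
inductive_cases wsort_MuE: "wsort D G (Mu Y t' P) t"
inductive_cases wsort_PrefE: "wsort D G (Pref u v P) t"
inductive_cases wsort_PlusE: "wsort D G (Plus P R) t"

lemma wsort_unique: "wsort D G P t1 \<Longrightarrow> wsort D G P t2 \<Longrightarrow> t1 = t2"
proof (induction arbitrary: t2 rule: wsort.induct)
  case (wsVar D Y t G)
  from wsVar.prems show ?case by (rule wsort_PVarE) (simp add: wsVar.hyps)
next
  case (wsSeq D G P k n R l)
  from wsSeq.prems show ?case by (rule wsort_SeqE) (metis Pair_inject wsSeq.IH)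
next
  case (wsTen D G P k l Q m n)
  from wsTen.prems show ?case by (rule wsort_TenE) (metis Pair_inject wsTen.IH)
next
  case (wsMu D Y t G P)
  from wsMu.prems show ?case by (rule wsort_MuE) simp
next
  case (wsPref u k v l G D P)
  from wsPref.prems show ?case by (rule wsort_PrefE) (simp add: wsPref.hyps)
next
  case (wsPlus D G P t Q)
  from wsPlus.prems show ?case by (rule wsort_PlusE) (simp add: wsPlus.IH)
qed

lemma wsort_mono: "wsort D G P t \<Longrightarrow> D \<subseteq>\<^sub>m D' \<Longrightarrow> G \<subseteq> G' \<Longrightarrow> wsort D' G' P t"
proof (induction arbitrary: D' G' rule: wsort.induct)
  case (wsVar D Y t G)
  then show ?case by (metis domI map_le_def wsort.wsVar)
next
  case (wsSeq D G P k n R l)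
  then show ?case by (metis wsort.wsSeq)
next
  case (wsTen D G P k l Q m n)
  then show ?case by (metis wsort.wsTen)
next
  case (wsMu D Y t G P)
  then show ?case by (metis map_le_upd wsort.wsMu)
next
  case (wsPref u k v l G D P)
  have "G \<union> bd u v \<subseteq> G' \<union> bd u v" using wsPref.prems by blast
  with wsPref have "wsort D' (G' \<union> bd u v) P (k, l)" by blast
  with wsPref show ?case by (intro wsort.wsPref) auto
next
  case (wsPlus D G P t Q)
  then show ?case by (metis wsort.wsPlus)
qed

lemma closed_sort_wsort: "closed_sort P t \<Longrightarrow> wsort D G P t"
  unfolding closed_sort_def by (erule wsort_mono) auto

lemma atom_of_lab_neq [simp]:
  "atom_of_lab z \<noteq> AVar x" "atom_of_lab z \<noteq> ABind x" "AVar x \<noteq> atom_of_lab z" "ABind x \<noteq> atom_of_lab z"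
  by (cases z; simp)+

lemma ABind_in_map_satom: "ABind x \<in> set (map (satom B s) u) \<longleftrightarrow> ABind x \<in> set u"
  proof (induction u)
  case (Cons a u) then show ?case by (cases a) auto
qed simp

lemma AVar_in_map_satom: "AVar x \<in> set (map (satom B s) u) \<longleftrightarrow> AVar x \<in> set u \<and> x \<notin> B"
  proof (induction u)
  case (Cons a u) then show ?case by (cases a) auto
qed simp

lemma bd_map_satom: "bd (map (satom B s) u) (map (satom B s) v) = bd u v"
  unfolding bd_def by (simp add: ABind_in_map_satom del: set_map)

lemma fvp_map_satom: "fvp (map (satom B s) u) (map (satom B s) v) = fvp u v - B"
  unfolding fvp_def by (auto simp: AVar_in_map_satom simp del: set_map)

lemma wsort_ssubst: "wsort D G' P t \<Longrightarrow> G' = G \<union> B \<Longrightarrow> wsort D G (ssubst B s P) t"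
proof (induction arbitrary: G B rule: wsort.induct)
  case (wsVar D Y t G')
  then show ?case by (simp add: wsort.wsVar)
next
  case (wsSeq D G' P k n R l)
  then show ?case by (metis ssubst.simps(2) wsort.wsSeq)
next
  case (wsTen D G' P k l Q m n)
  then show ?case by (metis ssubst.simps(3) wsort.wsTen)
next
  case (wsMu D Y t G' P)
  then show ?case by (metis ssubst.simps(6) wsort.wsMu)
next
  case (wsPref u k v l G' D P)
  have "G' \<union> bd u v = (G \<union> bd u v) \<union> (B - bd u v)" using wsPref.prems by blast
  then have "wsort D (G \<union> bd u v) (ssubst (B - bd u v) s P) (k, l)" by (rule wsPref.IH)
  with wsPref.hyps wsPref.prems show ?case
    by (auto intro!: wsort.wsPref simp: bd_map_satom fvp_map_satom)
next
  case (wsPlus D G' P t Q)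
  then show ?case by (simp add: wsort.wsPlus)
qed

lemma wsort_psubst:
  "wsort D' G P t \<Longrightarrow> D' = D(Y \<mapsto> t') \<Longrightarrow> closed_sort R t' \<Longrightarrow> wsort D G (psubst P Y R) t"
proof (induction arbitrary: D rule: wsort.induct)
  case (wsVar D' Z t G)
  then show ?case by (cases "Z = Y") (auto intro: closed_sort_wsort wsort.wsVar)
next
  case (wsSeq D' G P k n R' l)
  then show ?case by (metis psubst.simps(2) wsort.wsSeq)
next
  case (wsTen D' G P k l Q m n)
  then show ?case by (metis psubst.simps(3) wsort.wsTen)
next
  case (wsMu D' Z t G P)
  show ?case
  proof (cases "Z = Y")
    case True
    then have "D'(Z \<mapsto> t) = D(Z \<mapsto> t)" using wsMu.prems by (simp add: fun_eq_iff)
    with True wsMu.hyps show ?thesis by (simp add: wsort.wsMu)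
  next
    case False
    then have "D'(Z \<mapsto> t) = (D(Z \<mapsto> t))(Y \<mapsto> t')"
      using wsMu.prems by (auto simp: fun_upd_twist)
    then have "wsort (D(Z \<mapsto> t)) G (psubst P Y R) t" using wsMu.IH wsMu.prems by blast
    with False show ?thesis by (simp add: wsort.wsMu)
  qed
next
  case (wsPref u k v l G D' P)
  then show ?case by (simp add: wsort.wsPref)
next
  case (wsPlus D' G P t Q)
  then show ?case by (metis psubst.simps(5) wsort.wsPlus)
qed

lemma closed_sort_unique: "closed_sort P t1 \<Longrightarrow> closed_sort P t2 \<Longrightarrow> t1 = t2"
  unfolding closed_sort_def by (rule wsort_unique)

lemma closed_sort_Seq_iff:
  "closed_sort (Seq P R) (k, l) \<longleftrightarrow> (\<exists>n. closed_sort P (k, n) \<and> closed_sort R (n, l))"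
  unfolding closed_sort_def by (auto elim: wsort_SeqE intro: wsort.wsSeq)

lemma closed_sort_SeqI: "closed_sort P (k, n) \<Longrightarrow> closed_sort R (n, l) \<Longrightarrow> closed_sort (Seq P R) (k, l)"
  using closed_sort_Seq_iff by blast

lemma closed_sort_TenE:
  assumes "closed_sort (Ten P R) t"
  obtains k l m n where "t = (k + m, l + n)" "closed_sort P (k, l)" "closed_sort R (m, n)"
  using assms unfolding closed_sort_def by (elim wsort_TenE) blast

lemma closed_sort_TenI:
  "closed_sort P (k, l) \<Longrightarrow> closed_sort R (m, n) \<Longrightarrow> closed_sort (Ten P R) (k + m, l + n)"
  unfolding closed_sort_def by (rule wsort.wsTen)

lemma trans_closed_sort:
  "trans P a b Q \<Longrightarrow> closed_sort P (k, l) \<Longrightarrow> closed_sort Q (k, l) \<and> length a = k \<and> length b = l"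
proof (induction arbitrary: k l rule: trans.induct)
  case (tRefl P k' l')
  then have "(k', l') = (k, l)" by (rule closed_sort_unique)
  with tRefl.prems show ?case by simp
next
  case (tIotaL P a0 b0 R a b Q)
  then show ?case by blast
next
  case (tIotaR P a b R a0 b0 Q)
  then show ?case by blast
next
  case (tCut P a c Q R b S)
  from tCut.prems obtain n where "closed_sort P (k, n)" "closed_sort R (n, l)"
    by (auto simp: closed_sort_Seq_iff)
  with tCut.IH show ?case by (metis closed_sort_SeqI)
next
  case (tTen P a b Q R c d S)
  from tTen.prems obtain k1 l1 k2 l2 where "k = k1 + k2" "l = l1 + l2"
    and "closed_sort P (k1, l1)" "closed_sort R (k2, l2)"
    by (elim closed_sort_TenE) auto
  with tTen.IH show ?case by (metis closed_sort_TenI length_append)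
next
  case (tPref u v P s)
  then have "k = length u" "l = length v" "wsort Map.empty ({} \<union> bd u v) P (k, l)"
    unfolding closed_sort_def by (auto elim: wsort_PrefE)
  then show ?case unfolding closed_sort_def by (auto intro: wsort_ssubst)
next
  case (tRec P Y t a b Q)
  from tRec.prems have t: "t = (k, l)" and "wsort (Map.empty(Y \<mapsto> t)) {} P t"
    unfolding closed_sort_def by (auto elim: wsort_MuE)
  from wsort_psubst[OF this(2) refl] tRec.prems t
  have "closed_sort (psubst P Y (Mu Y t P)) (k, l)" unfolding closed_sort_def by simp
  then show ?case by (rule tRec.IH)
next
  case (tPlusIota P a b Q R S)
  then have "closed_sort P (k, l)" "closed_sort R (k, l)"
    unfolding closed_sort_def by (auto elim: wsort_PlusE)
  with tPlusIota.IH show ?case unfolding closed_sort_def by (blast intro: wsort.wsPlus)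
next
  case (tPlusL P a b Q R)
  then show ?case unfolding closed_sort_def by (blast elim: wsort_PlusE)
next
  case (tPlusR P a b Q R)
  then show ?case unfolding closed_sort_def by (blast elim: wsort_PlusE)
qed

section \<open>Simulations up to idle steps\<close>

lemma all_iota_replicate [simp]: "all_iota (replicate n None)"
  unfolding all_iota_def by simp

lemma all_iota_append [simp]: "all_iota (a @ b) \<longleftrightarrow> all_iota a \<and> all_iota b"
  unfolding all_iota_def by auto

lemma all_iota_eq_replicate: "all_iota w \<Longrightarrow> length w = n \<Longrightarrow> w = replicate n None"
  unfolding all_iota_def by (metis replicate_length_same)

definition simulates :: "('a trm \<times> 'a trm) set \<Rightarrow> bool" where
  "simulates Rel \<longleftrightarrow>
     (\<forall>(P, Q) \<in> Rel. \<forall>a b P'. trans P a b P' \<longrightarrow> (\<exists>Q'. trans Q a b Q' \<and> (P', Q') \<in> Rel))"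

lemma simulatesI:
  "(\<And>P Q a b P'. (P, Q) \<in> Rel \<Longrightarrow> trans P a b P' \<Longrightarrow> \<exists>Q'. trans Q a b Q' \<and> (P', Q') \<in> Rel)
    \<Longrightarrow> simulates Rel"
  unfolding simulates_def by blast

lemma bisimilarI:
  assumes "simulates Rel" "simulates (Rel\<inverse>)" "(P, Q) \<in> Rel" "closed_sort P t" "closed_sort Q t"
  shows "P \<approx> Q"
proof -
  have "is_bisim Rel"
    using assms(1,2) unfolding is_bisim_def simulates_def by fast
  with assms(3-5) show ?thesis unfolding bisimilar_def by blast
qed

text \<open>On sequential and tensor compositions the only transition rules besides the closure under
  idle steps are (Refl), (Cut) and (Ten); so to simulate such terms it suffices to match these.\<close>

lemma simulatesI_compound:
  assumes same_sort: "\<And>X Y. (X, Y) \<in> Rel \<Longrightarrow> \<exists>t. closed_sort X t \<and> closed_sort Y t"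
    and compound: "\<And>X Y. (X, Y) \<in> Rel \<Longrightarrow> \<exists>P R. X = Seq P R \<or> X = Ten P R"
    and cut: "\<And>P R Y a c b Q S. (Seq P R, Y) \<in> Rel \<Longrightarrow> trans P a c Q \<Longrightarrow> trans R c b S
        \<Longrightarrow> \<exists>Y'. trans Y a b Y' \<and> (Seq Q S, Y') \<in> Rel"
    and ten: "\<And>P R Y a b c d Q S. (Ten P R, Y) \<in> Rel \<Longrightarrow> trans P a b Q \<Longrightarrow> trans R c d S
        \<Longrightarrow> \<exists>Y'. trans Y (a @ c) (b @ d) Y' \<and> (Ten Q S, Y') \<in> Rel"
  shows "simulates Rel"
proof -
  have "\<exists>Y'. trans Y a b Y' \<and> (X', Y') \<in> Rel" if "trans X a b X'" "(X, Y) \<in> Rel" for X Y a b X'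
    using that
  proof (induction arbitrary: Y rule: trans.induct)
    case (tRefl X k l)
    from same_sort[OF tRefl.prems] tRefl.hyps have "closed_sort Y (k, l)"
      using closed_sort_unique by blast
    with tRefl.prems show ?case by (blast intro: trans.tRefl)
  next
    case (tIotaL X a0 b0 Z a b X')
    then show ?case by (meson trans.tIotaL)
  next
    case (tIotaR X a b Z a0 b0 X')
    then show ?case by (meson trans.tIotaR)
  next
    case (tCut P a c Q R b S)
    show ?case by (rule cut[OF tCut.prems tCut.hyps])
  next
    case (tTen P a b Q R c d S)
    show ?case by (rule ten[OF tTen.prems tTen.hyps])
  qed (use compound in fastforce)+
  then show ?thesis by (rule simulatesI)
qed

lemma trans_Ten_inv:
  "trans X a b X' \<Longrightarrow> X = Ten P R \<Longrightarrow>
    \<exists>a1 a2 b1 b2 P' R'. a = a1 @ a2 \<and> b = b1 @ b2 \<and> X' = Ten P' R' \<and> trans P a1 b1 P' \<and> trans R a2 b2 R'"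
proof (induction arbitrary: P R rule: trans.induct)
  case (tRefl X k l)
  then obtain k1 l1 k2 l2 where "k = k1 + k2" "l = l1 + l2" "closed_sort P (k1, l1)" "closed_sort R (k2, l2)"
    by (auto elim: closed_sort_TenE)
  with tRefl.prems show ?case by (metis replicate_add trans.tRefl)
next
  case (tIotaL X a0 b0 Z a b X')
  then show ?case by (fastforce intro: trans.tIotaL)
next
  case (tIotaR X a b Z a0 b0 X')
  then show ?case by (fastforce intro: trans.tIotaR)
next
  case (tTen P a b Q R c d S)
  then show ?case by blast
qed simp_all

lemma trans_TenE:
  assumes "trans (Ten P R) a b X'"
  obtains a1 a2 b1 b2 P' R' where "a = a1 @ a2" "b = b1 @ b2" "X' = Ten P' R'"
    "trans P a1 b1 P'" "trans R a2 b2 R'"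
  using trans_Ten_inv[OF assms refl] by blast

section \<open>Wires\<close>

definition wire :: "nat list \<Rightarrow> nat list \<Rightarrow> 'a trm" where
  "wire xs ys = Mu 0 (length xs, length ys) (Pref (map ABind xs) (map ABind ys) (PVar 0))"

text \<open>(Rec) followed by (Refl) makes the unfolding of a wire reachable, so a wire and its unfolding
  are treated together.\<close>

definition wire_states :: "nat list \<Rightarrow> nat list \<Rightarrow> 'a trm set" where
  "wire_states xs ys = {wire xs ys, Pref (map ABind xs) (map ABind ys) (wire xs ys)}"

lemma wire_in_wire_states: "wire xs ys \<in> wire_states xs ys"
  unfolding wire_states_def by simp

lemma fvp_map_ABind [simp]: "fvp (map ABind xs) (map ABind ys) = {}"
  unfolding fvp_def by auto

lemma ssubst_wire [simp]: "ssubst B s (wire xs ys) = wire xs ys"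
  unfolding wire_def by (simp add: comp_def)

lemma lab_of_comp_ABind [simp]: "lab_of s \<circ> ABind = s"
  by (rule ext) simp

lemma closed_sort_wire: "closed_sort (wire xs ys) (length xs, length ys)"
proof -
  let ?u = "map ABind xs" and ?v = "map ABind ys"
  have "wsort (Map.empty(0 \<mapsto> (length xs, length ys))) ({} \<union> bd ?u ?v) (PVar 0) (length ?u, length ?v)"
    by (rule wsort.wsVar) simp
  then have "wsort (Map.empty(0 \<mapsto> (length xs, length ys))) {} (Pref ?u ?v (PVar 0)) (length ?u, length ?v)"
    by (rule wsort.wsPref[rotated 4]) simp_all
  then show ?thesis unfolding closed_sort_def wire_def by (intro wsort.wsMu) simp
qed

lemma closed_sort_wire_states: "W \<in> wire_states xs ys \<Longrightarrow> closed_sort W (length xs, length ys)"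
proof -
  let ?u = "map ABind xs" and ?v = "map ABind ys"
  have "wsort Map.empty ({} \<union> bd ?u ?v) (wire xs ys) (length ?u, length ?v)"
    using closed_sort_wsort[OF closed_sort_wire] by simp
  then have "closed_sort (Pref ?u ?v (wire xs ys)) (length ?u, length ?v)"
    unfolding closed_sort_def by (rule wsort.wsPref[rotated 4]) simp_all
  with closed_sort_wire show "W \<in> wire_states xs ys \<Longrightarrow> closed_sort W (length xs, length ys)"
    unfolding wire_states_def by auto
qed

lemma trans_wire_states:
  assumes "W \<in> wire_states xs ys"
  shows "trans W (map s xs) (map s ys) (wire xs ys)"
proof -
  have unfolded: "trans (Pref (map ABind xs) (map ABind ys) (wire xs ys)) (map s xs) (map s ys) (wire xs ys)"
    using tPref[of "map ABind xs" "map ABind ys" "wire xs ys" s] by simp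
  then have "trans (wire xs ys) (map s xs) (map s ys) (wire xs ys)"
    unfolding wire_def by (intro tRec) simp
  with unfolded assms show ?thesis unfolding wire_states_def by auto
qed

lemma wire_states_trans:
  "trans W a b W' \<Longrightarrow> W \<in> wire_states xs ys \<Longrightarrow> W' \<in> wire_states xs ys \<and> (\<exists>s. a = map s xs \<and> b = map s ys)"
proof (induction rule: trans.induct)
  case (tRefl W k l)
  then have "k = length xs" "l = length ys"
    using closed_sort_wire_states closed_sort_unique by blast+
  then have "replicate k None = map (\<lambda>_. None) xs" "replicate l None = map (\<lambda>_. None) ys"
    by (simp_all add: map_replicate_const)
  with tRefl.prems show ?case by blast
next
  case (tIotaL P a0 b0 R a b Q)
  then show ?case by blast
next
  case (tIotaR P a b R a0 b0 Q)
  then show ?case by blast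
next
  case (tPref u v P s)
  then have "u = map ABind xs" "v = map ABind ys" "P = wire xs ys"
    unfolding wire_states_def wire_def by auto
  then show ?case by (auto simp: wire_in_wire_states)
next
  case (tRec P Y t a b Q)
  then have "Y = 0" "P = Pref (map ABind xs) (map ABind ys) (PVar 0)"
    unfolding wire_states_def wire_def by auto
  with tRec have "psubst P Y (Mu Y t P) \<in> wire_states xs ys"
    unfolding wire_states_def wire_def by auto
  then show ?case by (rule tRec.IH)
qed (simp_all add: wire_states_def wire_def)

definition Id_states :: "nat \<Rightarrow> 'a trm set" where
  "Id_states k = wire_states [0..<k] [0..<k]"

definition Tw_states :: "nat \<Rightarrow> nat \<Rightarrow> 'a trm set" where
  "Tw_states k l = wire_states ([0..<k] @ [k..<k + l]) ([k..<k + l] @ [0..<k])"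

lemma Id_k_eq_wire: "Id_k k = wire [0..<k] [0..<k]"
  unfolding Id_k_def wire_def by simp

lemma Tw_eq_wire: "Tw k l = wire ([0..<k] @ [k..<k + l]) ([k..<k + l] @ [0..<k])"
  unfolding Tw_def wire_def by simp

lemma Id_k_in_Id_states: "Id_k k \<in> Id_states k"
  unfolding Id_states_def Id_k_eq_wire by (rule wire_in_wire_states)

lemma Tw_in_Tw_states: "Tw k l \<in> Tw_states k l"
  unfolding Tw_states_def Tw_eq_wire by (rule wire_in_wire_states)

lemma closed_sort_Id_states: "J \<in> Id_states k \<Longrightarrow> closed_sort J (k, k)"
  unfolding Id_states_def using closed_sort_wire_states by fastforce

lemma closed_sort_Tw_states: "W \<in> Tw_states k l \<Longrightarrow> closed_sort W (k + l, l + k)"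
  unfolding Tw_states_def using closed_sort_wire_states by fastforce

lemma Id_states_trans:
  "trans J a b J' \<Longrightarrow> J \<in> Id_states k \<Longrightarrow> J' \<in> Id_states k \<and> b = a \<and> length a = k"
  unfolding Id_states_def by (auto dest: wire_states_trans)

lemma trans_Id_states:
  assumes "J \<in> Id_states k" "length a = k"
  shows "trans J a a (Id_k k)"
proof -
  have "map (nth a) [0..<k] = a" using assms(2) by (metis map_nth)
  with trans_wire_states[of J "[0..<k]" "[0..<k]" "nth a"] assms(1) show ?thesis
    unfolding Id_states_def Id_k_eq_wire by simp
qed

lemma Tw_states_trans:
  assumes "trans W a b W'" "W \<in> Tw_states k l"
  shows "W' \<in> Tw_states k l \<and> (\<exists>a1 a2. a = a1 @ a2 \<and> b = a2 @ a1 \<and> length a1 = k \<and> length a2 = l)"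
proof -
  from wire_states_trans[OF assms(1)] assms(2) obtain s where "W' \<in> Tw_states k l"
    and "a = map s ([0..<k] @ [k..<k + l])" "b = map s ([k..<k + l] @ [0..<k])"
    unfolding Tw_states_def by blast
  then show ?thesis by (intro conjI exI[of _ "map s [0..<k]"] exI[of _ "map s [k..<k + l]"]) simp_all
qed

lemma trans_Tw_states:
  assumes "W \<in> Tw_states k l" "length a1 = k" "length a2 = l"
  shows "trans W (a1 @ a2) (a2 @ a1) (Tw k l)"
proof -
  let ?s = "nth (a1 @ a2)"
  have "map ?s [0..<k] = a1" "map ?s [k..<k + l] = a2"
    using assms(2,3) by (simp_all add: list_eq_iff_nth_eq nth_append)
  with trans_wire_states[of W "[0..<k] @ [k..<k + l]" "[k..<k + l] @ [0..<k]" ?s] assms(1)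
  show ?thesis
    unfolding Tw_states_def Tw_eq_wire by simp
qed

section \<open>Transitions of sequential composites\<close>

text \<open>Unlike a step of \<open>P \<otimes> R\<close>, a step of \<open>P ; Q\<close> need not come from a single cut: the
  closure under idle steps may chain several cuts whose inner labels are not idle. Hence steps of
  sequential composites are rearranged by induction on their derivation, letting the other
  components idle during its idle steps.\<close>

lemma trans_Seq_assoc_right:
  "trans X a c X' \<Longrightarrow> X = Seq P Q \<Longrightarrow> closed_sort X (k, m) \<Longrightarrow> closed_sort R (m, n) \<Longrightarrow> trans R c b S
    \<Longrightarrow> \<exists>P' Q'. X' = Seq P' Q' \<and> trans (Seq P (Seq Q R)) a b (Seq P' (Seq Q' S))"
proof (induction arbitrary: P Q R b S rule: trans.induct)
  case (tRefl X k' m')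
  then obtain l where P: "closed_sort P (k', l)" and Q: "closed_sort Q (l, m')"
    by (auto simp: closed_sort_Seq_iff)
  from tRefl have "m' = m" using closed_sort_unique by blast
  with Q tRefl.prems have "trans (Seq Q R) (replicate l None) b (Seq Q S)"
    by (blast intro: tCut trans.tRefl)
  with P tRefl.prems show ?case by (blast intro: tCut trans.tRefl)
next
  case (tIotaL X a0 c0 Z a c X')
  from tIotaL.prems tIotaL.hyps have Z: "closed_sort Z (k, m)" and "length c0 = m"
    using trans_closed_sort by blast+
  with tIotaL.hyps have "c0 = replicate m None" by (simp add: all_iota_eq_replicate)
  with tIotaL.prems(3) have "trans R c0 (replicate n None) R" by (simp add: trans.tRefl)
  with tIotaL.IH(1) tIotaL.prems obtain P1 Q1 where
    Z_eq: "Z = Seq P1 Q1" and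
    first: "trans (Seq P (Seq Q R)) a0 (replicate n None) (Seq P1 (Seq Q1 R))" by blast
  from tIotaL.IH(2)[OF Z_eq] Z Z_eq tIotaL.prems obtain P' Q' where
    "X' = Seq P' Q'" "trans (Seq P1 (Seq Q1 R)) a b (Seq P' (Seq Q' S))" by blast
  with first tIotaL.hyps show ?case by (blast intro: trans.tIotaL all_iota_replicate)
next
  case (tIotaR X a c Z a0 c0 X')
  from tIotaR.IH(1) tIotaR.prems obtain P1 Q1 where
    Z_eq: "Z = Seq P1 Q1" and first: "trans (Seq P (Seq Q R)) a b (Seq P1 (Seq Q1 S))" by blast
  from tIotaR.prems tIotaR.hyps have Z: "closed_sort Z (k, m)" and S: "closed_sort S (m, n)"
    using trans_closed_sort by blast+
  from tIotaR.hyps Z have "c0 = replicate m None"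
    using trans_closed_sort all_iota_eq_replicate by blast
  with S have "trans S c0 (replicate n None) S" by (simp add: trans.tRefl)
  with tIotaR.IH(2)[OF Z_eq] Z Z_eq S obtain P' Q' where
    "X' = Seq P' Q'" "trans (Seq P1 (Seq Q1 S)) a0 (replicate n None) (Seq P' (Seq Q' S))" by blast
  with first tIotaR.hyps show ?case by (blast intro: trans.tIotaR all_iota_replicate)
next
  case (tCut P0 a d P' Q0 c Q')
  then show ?case by (blast intro: trans.tCut)
qed simp_all

lemma trans_Seq_assoc_left:
  "trans X c b X' \<Longrightarrow> X = Seq Q R \<Longrightarrow> closed_sort X (l, n) \<Longrightarrow> closed_sort P (k, l) \<Longrightarrow> trans P a c P'
    \<Longrightarrow> \<exists>Q' R'. X' = Seq Q' R' \<and> trans (Seq (Seq P Q) R) a b (Seq (Seq P' Q') R')"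
proof (induction arbitrary: P Q R a P' rule: trans.induct)
  case (tRefl X l' n')
  then obtain m where Q: "closed_sort Q (l', m)" and R: "closed_sort R (m, n')"
    by (auto simp: closed_sort_Seq_iff)
  with tRefl.prems have "trans (Seq P Q) a (replicate m None) (Seq P' Q)"
    by (blast intro: tCut trans.tRefl)
  with R tRefl.prems show ?case by (blast intro: tCut trans.tRefl)
next
  case (tIotaL X c0 b0 Z c b X')
  from tIotaL.prems tIotaL.hyps have Z: "closed_sort Z (l, n)" and "length c0 = l"
    using trans_closed_sort by blast+
  with tIotaL.hyps have "c0 = replicate l None" by (simp add: all_iota_eq_replicate)
  with tIotaL.prems(3) have "trans P (replicate k None) c0 P" by (simp add: trans.tRefl)
  with tIotaL.IH(1) tIotaL.prems obtain Q1 R1 where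
    Z_eq: "Z = Seq Q1 R1" and
    first: "trans (Seq (Seq P Q) R) (replicate k None) b0 (Seq (Seq P Q1) R1)" by blast
  from tIotaL.IH(2)[OF Z_eq] Z Z_eq tIotaL.prems obtain Q' R' where
    "X' = Seq Q' R'" "trans (Seq (Seq P Q1) R1) a b (Seq (Seq P' Q') R')" by blast
  with first tIotaL.hyps show ?case by (blast intro: trans.tIotaL all_iota_replicate)
next
  case (tIotaR X c b Z c0 b0 X')
  from tIotaR.IH(1) tIotaR.prems obtain Q1 R1 where
    Z_eq: "Z = Seq Q1 R1" and first: "trans (Seq (Seq P Q) R) a b (Seq (Seq P' Q1) R1)" by blast
  from tIotaR.prems tIotaR.hyps have Z: "closed_sort Z (l, n)" and P': "closed_sort P' (k, l)"
    using trans_closed_sort by blast+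
  from tIotaR.hyps Z have "c0 = replicate l None"
    using trans_closed_sort all_iota_eq_replicate by blast
  with P' have "trans P' (replicate k None) c0 P'" by (simp add: trans.tRefl)
  with tIotaR.IH(2)[OF Z_eq] Z Z_eq P' obtain Q' R' where
    "X' = Seq Q' R'" "trans (Seq (Seq P' Q1) R1) (replicate k None) b0 (Seq (Seq P' Q') R')" by blast
  with first tIotaR.hyps show ?case by (blast intro: trans.tIotaR all_iota_replicate)
next
  case (tCut Q0 c d Q' R0 b R')
  then show ?case by (blast intro: trans.tCut)
qed simp_all

lemma trans_interchange_cut:
  "trans Y a2 b2 Y' \<Longrightarrow> Y = Seq S T \<Longrightarrow> closed_sort P (k, l) \<Longrightarrow> closed_sort Q (l, m)
    \<Longrightarrow> trans P a1 c P' \<Longrightarrow> trans Q c b1 Q'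
    \<Longrightarrow> \<exists>S' T'. Y' = Seq S' T' \<and>
          trans (Seq (Ten P S) (Ten Q T)) (a1 @ a2) (b1 @ b2) (Seq (Ten P' S') (Ten Q' T'))"
proof (induction arbitrary: S T P Q a1 c b1 P' Q' rule: trans.induct)
  case (tRefl Y n v)
  then obtain u where "closed_sort S (n, u)" "closed_sort T (u, v)"
    by (auto simp: closed_sort_Seq_iff)
  with tRefl.prems show ?case by (blast intro: tCut tTen trans.tRefl)
next
  case (tIotaL Y a0 b0 Z a2 b2 Y')
  from tIotaL.prems have "trans P (replicate k None) (replicate l None) P"
    "trans Q (replicate l None) (replicate m None) Q" by (blast intro: trans.tRefl)+
  with tIotaL.IH(1) tIotaL.prems obtain S1 T1 where Z_eq: "Z = Seq S1 T1" and
    first: "trans (Seq (Ten P S) (Ten Q T)) (replicate k None @ a0) (replicate m None @ b0)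
      (Seq (Ten P S1) (Ten Q T1))" by blast
  from tIotaL.IH(2)[OF Z_eq] tIotaL.prems obtain S' T' where "Y' = Seq S' T'"
    "trans (Seq (Ten P S1) (Ten Q T1)) (a1 @ a2) (b1 @ b2) (Seq (Ten P' S') (Ten Q' T'))" by blast
  with first tIotaL.hyps show ?case by (auto intro: trans.tIotaL)
next
  case (tIotaR Y a2 b2 Z a0 b0 Y')
  from tIotaR.IH(1) tIotaR.prems obtain S1 T1 where Z_eq: "Z = Seq S1 T1" and
    first: "trans (Seq (Ten P S) (Ten Q T)) (a1 @ a2) (b1 @ b2) (Seq (Ten P' S1) (Ten Q' T1))" by blast
  from tIotaR.prems have P': "closed_sort P' (k, l)" and Q': "closed_sort Q' (l, m)"
    using trans_closed_sort by blast+
  then have "trans P' (replicate k None) (replicate l None) P'"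
    "trans Q' (replicate l None) (replicate m None) Q'" by (blast intro: trans.tRefl)+
  with tIotaR.IH(2)[OF Z_eq P' Q'] obtain S' T' where "Y' = Seq S' T'"
    "trans (Seq (Ten P' S1) (Ten Q' T1)) (replicate k None @ a0) (replicate m None @ b0)
      (Seq (Ten P' S') (Ten Q' T'))" by blast
  with first tIotaR.hyps show ?case by (auto intro: trans.tIotaR)
next
  case (tCut S0 a2 d S' T0 b2 T')
  then have "trans (Ten P S) (a1 @ a2) (c @ d) (Ten P' S')" "trans (Ten Q T) (c @ d) (b1 @ b2) (Ten Q' T')"
    by (simp_all add: tTen)
  then show ?case by (blast intro: trans.tCut)
qed simp_all

lemma trans_interchange:
  "trans X a1 b1 X' \<Longrightarrow> X = Seq P Q \<Longrightarrow> closed_sort X (k, m) \<Longrightarrow> closed_sort (Seq S T) (n, v) \<Longrightarrow> trans (Seq S T) a2 b2 Y'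
    \<Longrightarrow> \<exists>P' Q' S' T'. X' = Seq P' Q' \<and> Y' = Seq S' T' \<and>
          trans (Seq (Ten P S) (Ten Q T)) (a1 @ a2) (b1 @ b2) (Seq (Ten P' S') (Ten Q' T'))"
proof (induction arbitrary: P Q S T a2 b2 Y' rule: trans.induct)
  case (tRefl X k' m')
  then obtain l where "closed_sort P (k', l)" "closed_sort Q (l, m')"
    by (auto simp: closed_sort_Seq_iff)
  with tRefl.prems show ?case by (blast dest: trans_interchange_cut intro: trans.tRefl)
next
  case (tIotaL X a0 b0 Z a1 b1 X')
  from tIotaL.prems tIotaL.hyps have Z: "closed_sort Z (k, m)"
    using trans_closed_sort by blast
  from tIotaL.IH(1) tIotaL.prems trans.tRefl[OF tIotaL.prems(3)] obtain P1 Q1 where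
    Z_eq: "Z = Seq P1 Q1" and
    first: "trans (Seq (Ten P S) (Ten Q T)) (a0 @ replicate n None) (b0 @ replicate v None)
      (Seq (Ten P1 S) (Ten Q1 T))" by blast
  from tIotaL.IH(2)[OF Z_eq] Z Z_eq tIotaL.prems obtain P' Q' S' T' where
    "X' = Seq P' Q'" "Y' = Seq S' T'"
    "trans (Seq (Ten P1 S) (Ten Q1 T)) (a1 @ a2) (b1 @ b2) (Seq (Ten P' S') (Ten Q' T'))" by blast
  with first tIotaL.hyps show ?case by (auto intro: trans.tIotaL)
next
  case (tIotaR X a1 b1 Z a0 b0 X')
  from tIotaR.IH(1) tIotaR.prems obtain P1 Q1 S1 T1 where
    Z_eq: "Z = Seq P1 Q1" and Y': "Y' = Seq S1 T1" and
    first: "trans (Seq (Ten P S) (Ten Q T)) (a1 @ a2) (b1 @ b2) (Seq (Ten P1 S1) (Ten Q1 T1))" by blast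
  from tIotaR.prems tIotaR.hyps Y' have Z: "closed_sort Z (k, m)" and ST1: "closed_sort (Seq S1 T1) (n, v)"
    using trans_closed_sort by blast+
  from tIotaR.IH(2)[OF Z_eq] Z Z_eq ST1 trans.tRefl[OF ST1] obtain P' Q' where "X' = Seq P' Q'"
    "trans (Seq (Ten P1 S1) (Ten Q1 T1)) (a0 @ replicate n None) (b0 @ replicate v None)
      (Seq (Ten P' S1) (Ten Q' T1))" by blast
  with first Y' tIotaR.hyps show ?case by (auto intro: trans.tIotaR)
next
  case (tCut P0 a1 c P' Q0 b1 Q')
  then obtain l where "closed_sort P (k, l)" "closed_sort Q (l, m)"
    by (auto simp: closed_sort_Seq_iff)
  from trans_interchange_cut[OF tCut.prems(4) refl this] tCut show ?case by auto
qed simp_all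

section \<open>The laws\<close>

definition Seq_assoc_rel :: "nat \<Rightarrow> nat \<Rightarrow> ('a trm \<times> 'a trm) set" where
  "Seq_assoc_rel k n = {(Seq (Seq P Q) R, Seq P (Seq Q R)) | P Q R.
     \<exists>l m. closed_sort P (k, l) \<and> closed_sort Q (l, m) \<and> closed_sort R (m, n)}"

lemma Seq_assoc_rel_closed_sort:
  "(X, Y) \<in> Seq_assoc_rel k n \<Longrightarrow> closed_sort X (k, n) \<and> closed_sort Y (k, n)"
  unfolding Seq_assoc_rel_def by (auto intro: closed_sort_SeqI)

lemma simulates_Seq_assoc_rel: "simulates (Seq_assoc_rel k n)"
proof (rule simulatesI_compound)
  fix P0 R Y a c b Q0 S
  assume "(Seq P0 R, Y) \<in> Seq_assoc_rel k n" and P0: "trans P0 a c Q0" and R: "trans R c b S"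
  then obtain P Q l m where eq: "P0 = Seq P Q" "Y = Seq P (Seq Q R)"
    and sort: "closed_sort P (k, l)" "closed_sort Q (l, m)" "closed_sort R (m, n)"
    unfolding Seq_assoc_rel_def by blast
  with P0 R obtain P' Q' where "Q0 = Seq P' Q'" "trans Y a b (Seq P' (Seq Q' S))"
    using trans_Seq_assoc_right[OF P0] closed_sort_SeqI by blast
  moreover from this P0 R eq sort have "(Seq Q0 S, Seq P' (Seq Q' S)) \<in> Seq_assoc_rel k n"
    unfolding Seq_assoc_rel_def using trans_closed_sort closed_sort_SeqI
    by (fastforce simp: closed_sort_Seq_iff)
  ultimately show "\<exists>Y'. trans Y a b Y' \<and> (Seq Q0 S, Y') \<in> Seq_assoc_rel k n" by blast
qed (blast dest: Seq_assoc_rel_closed_sort, auto simp: Seq_assoc_rel_def)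

lemma simulates_converse_Seq_assoc_rel: "simulates ((Seq_assoc_rel k n)\<inverse>)"
proof (rule simulatesI_compound)
  fix P R0 X a c b Q S0
  assume "(Seq P R0, X) \<in> (Seq_assoc_rel k n)\<inverse>" and P: "trans P a c Q" and R0: "trans R0 c b S0"
  then obtain Q0 R l m where eq: "R0 = Seq Q0 R" "X = Seq (Seq P Q0) R"
    and sort: "closed_sort P (k, l)" "closed_sort Q0 (l, m)" "closed_sort R (m, n)"
    unfolding Seq_assoc_rel_def by blast
  with P R0 obtain Q' R' where "S0 = Seq Q' R'" "trans X a b (Seq (Seq Q Q') R')"
    using trans_Seq_assoc_left[OF R0] closed_sort_SeqI by blast
  moreover from this P R0 eq sort have "(Seq Q S0, Seq (Seq Q Q') R') \<in> (Seq_assoc_rel k n)\<inverse>"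
    unfolding Seq_assoc_rel_def using trans_closed_sort closed_sort_SeqI
    by (fastforce simp: closed_sort_Seq_iff)
  ultimately show "\<exists>X'. trans X a b X' \<and> (Seq Q S0, X') \<in> (Seq_assoc_rel k n)\<inverse>" by blast
qed (blast dest: Seq_assoc_rel_closed_sort, auto simp: Seq_assoc_rel_def)

lemma Seq_assoc_bisimilar:
  assumes "closed_sort P (k, l)" "closed_sort Q (l, m)" "closed_sort R (m, n)"
  shows "Seq (Seq P Q) R \<approx> Seq P (Seq Q R)"
proof -
  have "(Seq (Seq P Q) R, Seq P (Seq Q R)) \<in> Seq_assoc_rel k n"
    unfolding Seq_assoc_rel_def using assms by blast
  with Seq_assoc_rel_closed_sort[OF this] show ?thesis
    by (blast intro: bisimilarI simulates_Seq_assoc_rel simulates_converse_Seq_assoc_rel)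
qed

definition Ten_assoc_rel :: "sort \<Rightarrow> sort \<Rightarrow> sort \<Rightarrow> ('a trm \<times> 'a trm) set" where
  "Ten_assoc_rel s1 s2 s3 = {(Ten (Ten P R) T, Ten P (Ten R T)) | P R T.
     closed_sort P s1 \<and> closed_sort R s2 \<and> closed_sort T s3}"

lemma Ten_assoc_rel_closed_sort:
  assumes "(X, Y) \<in> Ten_assoc_rel (k, l) (m, n) (u, v)"
  shows "closed_sort X (k + m + u, l + n + v) \<and> closed_sort Y (k + m + u, l + n + v)"
proof -
  from assms obtain P R T where "X = Ten (Ten P R) T" "Y = Ten P (Ten R T)"
    and "closed_sort P (k, l)" "closed_sort R (m, n)" "closed_sort T (u, v)"
    unfolding Ten_assoc_rel_def by blast
  with closed_sort_TenI show ?thesis by (metis add.assoc)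
qed

lemma simulates_Ten_assoc_rel: "simulates (Ten_assoc_rel (k, l) (m, n) (u, v))"
proof (rule simulatesI_compound)
  fix P0 T Y a b c d Q0 S
  assume "(Ten P0 T, Y) \<in> Ten_assoc_rel (k, l) (m, n) (u, v)" and P0: "trans P0 a b Q0" and T: "trans T c d S"
  then obtain P R where eq: "P0 = Ten P R" "Y = Ten P (Ten R T)"
    and sort: "closed_sort P (k, l)" "closed_sort R (m, n)" "closed_sort T (u, v)"
    unfolding Ten_assoc_rel_def by blast
  from P0 obtain a1 a2 b1 b2 P' R' where "a = a1 @ a2" "b = b1 @ b2" "Q0 = Ten P' R'"
    and PR: "trans P a1 b1 P'" "trans R a2 b2 R'"
    unfolding eq by (rule trans_TenE)
  moreover from PR T have "trans Y (a1 @ a2 @ c) (b1 @ b2 @ d) (Ten P' (Ten R' S))"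
    unfolding eq by (intro tTen)
  moreover from PR T sort have "(Ten (Ten P' R') S, Ten P' (Ten R' S)) \<in> Ten_assoc_rel (k, l) (m, n) (u, v)"
    unfolding Ten_assoc_rel_def using trans_closed_sort by blast
  ultimately show "\<exists>Y'. trans Y (a @ c) (b @ d) Y' \<and> (Ten Q0 S, Y') \<in> Ten_assoc_rel (k, l) (m, n) (u, v)"
    by auto
qed (blast dest: Ten_assoc_rel_closed_sort, auto simp: Ten_assoc_rel_def)

lemma simulates_converse_Ten_assoc_rel: "simulates ((Ten_assoc_rel (k, l) (m, n) (u, v))\<inverse>)"
proof (rule simulatesI_compound)
  fix P R0 X a b c d Q S0
  assume "(Ten P R0, X) \<in> (Ten_assoc_rel (k, l) (m, n) (u, v))\<inverse>" and P: "trans P a b Q"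
    and R0: "trans R0 c d S0"
  then obtain R T where eq: "R0 = Ten R T" "X = Ten (Ten P R) T"
    and sort: "closed_sort P (k, l)" "closed_sort R (m, n)" "closed_sort T (u, v)"
    unfolding Ten_assoc_rel_def by blast
  from R0 obtain c1 c2 d1 d2 R' T' where "c = c1 @ c2" "d = d1 @ d2" "S0 = Ten R' T'"
    and RT: "trans R c1 d1 R'" "trans T c2 d2 T'"
    unfolding eq by (rule trans_TenE)
  moreover from P RT have "trans X ((a @ c1) @ c2) ((b @ d1) @ d2) (Ten (Ten Q R') T')"
    unfolding eq by (intro tTen)
  moreover from P RT sort
  have "(Ten Q (Ten R' T'), Ten (Ten Q R') T') \<in> (Ten_assoc_rel (k, l) (m, n) (u, v))\<inverse>"
    unfolding converse_iff Ten_assoc_rel_def using trans_closed_sort by blast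
  ultimately show
    "\<exists>X'. trans X (a @ c) (b @ d) X' \<and> (Ten Q S0, X') \<in> (Ten_assoc_rel (k, l) (m, n) (u, v))\<inverse>"
    by auto
qed (blast dest: Ten_assoc_rel_closed_sort, auto simp: Ten_assoc_rel_def)

lemma Ten_assoc_bisimilar:
  assumes "closed_sort P (k, l)" "closed_sort R (m, n)" "closed_sort T (u, v)"
  shows "Ten (Ten P R) T \<approx> Ten P (Ten R T)"
proof -
  have "(Ten (Ten P R) T, Ten P (Ten R T)) \<in> Ten_assoc_rel (k, l) (m, n) (u, v)"
    unfolding Ten_assoc_rel_def using assms by blast
  with Ten_assoc_rel_closed_sort[OF this] show ?thesis
    by (blast intro: bisimilarI simulates_Ten_assoc_rel simulates_converse_Ten_assoc_rel)
qed

definition interchange_rel :: "nat \<Rightarrow> nat \<Rightarrow> nat \<Rightarrow> nat \<Rightarrow> ('a trm \<times> 'a trm) set" where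
  "interchange_rel k m n v = {(Seq (Ten P S) (Ten Q T), Ten (Seq P Q) (Seq S T)) | P Q S T. \<exists>l u.
     closed_sort P (k, l) \<and> closed_sort Q (l, m) \<and> closed_sort S (n, u) \<and> closed_sort T (u, v)}"

lemma interchange_rel_closed_sort:
  "(X, Y) \<in> interchange_rel k m n v \<Longrightarrow> closed_sort X (k + n, m + v) \<and> closed_sort Y (k + n, m + v)"
  unfolding interchange_rel_def by (blast intro: closed_sort_TenI closed_sort_SeqI)

lemma simulates_interchange_rel: "simulates (interchange_rel k m n v)"
proof (rule simulatesI_compound)
  fix P0 R0 Y a c b Q0 S0
  assume "(Seq P0 R0, Y) \<in> interchange_rel k m n v" and P0: "trans P0 a c Q0" and R0: "trans R0 c b S0"
  then obtain P Q S T l u where eq: "P0 = Ten P S" "R0 = Ten Q T" "Y = Ten (Seq P Q) (Seq S T)"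
    and sort: "closed_sort P (k, l)" "closed_sort Q (l, m)" "closed_sort S (n, u)" "closed_sort T (u, v)"
    unfolding interchange_rel_def by blast
  from P0 obtain a1 a2 c1 c2 P' S' where a: "a = a1 @ a2" and c: "c = c1 @ c2" and "Q0 = Ten P' S'"
    and PS: "trans P a1 c1 P'" "trans S a2 c2 S'"
    unfolding eq by (rule trans_TenE)
  moreover from R0 obtain d1 d2 b1 b2 Q' T' where d: "c = d1 @ d2" and b: "b = b1 @ b2"
    and "S0 = Ten Q' T'" and QT: "trans Q d1 b1 Q'" "trans T d2 b2 T'"
    unfolding eq by (rule trans_TenE)
  moreover have "d1 = c1" "d2 = c2"
    using c d trans_closed_sort[OF PS(1) sort(1)] trans_closed_sort[OF QT(1) sort(2)] by auto
  ultimately have "trans Y a b (Ten (Seq P' Q') (Seq S' T'))"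
    and "(Seq Q0 S0, Ten (Seq P' Q') (Seq S' T')) \<in> interchange_rel k m n v"
    using PS QT sort trans_closed_sort unfolding eq interchange_rel_def by (simp_all add: tCut tTen) blast
  then show "\<exists>Y'. trans Y a b Y' \<and> (Seq Q0 S0, Y') \<in> interchange_rel k m n v" by blast
qed (blast dest: interchange_rel_closed_sort, auto simp: interchange_rel_def)

lemma simulates_converse_interchange_rel: "simulates ((interchange_rel k m n v)\<inverse>)"
proof (rule simulatesI_compound)
  fix P0 R0 X a b c d Q0 S0
  assume "(Ten P0 R0, X) \<in> (interchange_rel k m n v)\<inverse>" and P0: "trans P0 a b Q0"
    and R0: "trans R0 c d S0"
  then obtain P Q S T l u where eq: "P0 = Seq P Q" "R0 = Seq S T" "X = Seq (Ten P S) (Ten Q T)"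
    and sort: "closed_sort P (k, l)" "closed_sort Q (l, m)" "closed_sort S (n, u)" "closed_sort T (u, v)"
    unfolding interchange_rel_def by blast
  then have PQ: "closed_sort P0 (k, m)" and ST: "closed_sort R0 (n, v)"
    by (auto intro: closed_sort_SeqI)
  from trans_interchange[OF P0 eq(1) PQ] ST R0 eq obtain P' Q' S' T' where
    "Q0 = Seq P' Q'" "S0 = Seq S' T'" "trans X (a @ c) (b @ d) (Seq (Ten P' S') (Ten Q' T'))"
    by blast
  moreover have "closed_sort (Seq P' Q') (k, m)" "closed_sort (Seq S' T') (n, v)"
    using calculation P0 R0 PQ ST trans_closed_sort by metis+
  then have "(Ten Q0 S0, Seq (Ten P' S') (Ten Q' T')) \<in> (interchange_rel k m n v)\<inverse>"
    unfolding calculation(1,2) converse_iff interchange_rel_def closed_sort_Seq_iff by blast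
  ultimately show "\<exists>X'. trans X (a @ c) (b @ d) X' \<and> (Ten Q0 S0, X') \<in> (interchange_rel k m n v)\<inverse>"
    by blast
qed (blast dest: interchange_rel_closed_sort, auto simp: interchange_rel_def)

lemma interchange_bisimilar:
  assumes "closed_sort P (k, l)" "closed_sort Q (l, m)" "closed_sort S (n, u)" "closed_sort T (u, v)"
  shows "Seq (Ten P S) (Ten Q T) \<approx> Ten (Seq P Q) (Seq S T)"
proof -
  have "(Seq (Ten P S) (Ten Q T), Ten (Seq P Q) (Seq S T)) \<in> interchange_rel k m n v"
    unfolding interchange_rel_def using assms by blast
  with interchange_rel_closed_sort[OF this] show ?thesis
    by (blast intro: bisimilarI simulates_interchange_rel simulates_converse_interchange_rel)
qed

lemma Seq_Id_bisimilar:
  assumes "closed_sort P (k, l)"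
  shows "Seq P (Id_k l) \<approx> P"
proof -
  define Rel :: "('a trm \<times> 'a trm) set" where
    "Rel = {(Seq P J, P) | P J. closed_sort P (k, l) \<and> J \<in> Id_states l}"
  have sorts: "closed_sort X (k, l) \<and> closed_sort Y (k, l)" if "(X, Y) \<in> Rel" for X Y
    using that unfolding Rel_def by (blast intro: closed_sort_SeqI closed_sort_Id_states)
  have "simulates Rel"
  proof (rule simulatesI_compound)
    fix P J Y a c b Q J'
    assume "(Seq P J, Y) \<in> Rel" and P: "trans P a c Q" and J: "trans J c b J'"
    then have "Y = P" "closed_sort P (k, l)" "J' \<in> Id_states l" "b = c"
      unfolding Rel_def using Id_states_trans by blast+
    with P show "\<exists>Y'. trans Y a b Y' \<and> (Seq Q J', Y') \<in> Rel"
      unfolding Rel_def using trans_closed_sort by blast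
  qed (blast dest: sorts, auto simp: Rel_def)
  moreover have "simulates (Rel\<inverse>)"
  proof (rule simulatesI)
    fix P X a b Q
    assume "(P, X) \<in> Rel\<inverse>" and P: "trans P a b Q"
    then obtain J where "X = Seq P J" "closed_sort P (k, l)" "J \<in> Id_states l"
      unfolding Rel_def by blast
    with P have "trans X a b (Seq Q (Id_k l))" "(Seq Q (Id_k l), Q) \<in> Rel"
      unfolding Rel_def using trans_closed_sort trans_Id_states Id_k_in_Id_states by (blast intro: tCut)+
    then show "\<exists>X'. trans X a b X' \<and> (Q, X') \<in> Rel\<inverse>" by blast
  qed
  moreover have "(Seq P (Id_k l), P) \<in> Rel"
    unfolding Rel_def using assms Id_k_in_Id_states by blast
  ultimately show ?thesis using sorts by (blast intro: bisimilarI)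
qed

lemma Id_Seq_bisimilar:
  assumes "closed_sort P (k, l)"
  shows "P \<approx> Seq (Id_k k) P"
proof -
  define Rel :: "('a trm \<times> 'a trm) set" where
    "Rel = {(Seq J P, P) | P J. closed_sort P (k, l) \<and> J \<in> Id_states k}"
  have sorts: "closed_sort X (k, l) \<and> closed_sort Y (k, l)" if "(X, Y) \<in> Rel" for X Y
    using that unfolding Rel_def by (blast intro: closed_sort_SeqI closed_sort_Id_states)
  have "simulates Rel"
  proof (rule simulatesI_compound)
    fix J P Y a c b J' Q
    assume "(Seq J P, Y) \<in> Rel" and J: "trans J a c J'" and P: "trans P c b Q"
    then have "Y = P" "closed_sort P (k, l)" "J' \<in> Id_states k" "c = a"
      unfolding Rel_def using Id_states_trans by blast+
    with P show "\<exists>Y'. trans Y a b Y' \<and> (Seq J' Q, Y') \<in> Rel"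
      unfolding Rel_def using trans_closed_sort by blast
  qed (blast dest: sorts, auto simp: Rel_def)
  moreover have "simulates (Rel\<inverse>)"
  proof (rule simulatesI)
    fix P X a b Q
    assume "(P, X) \<in> Rel\<inverse>" and P: "trans P a b Q"
    then obtain J where "X = Seq J P" "closed_sort P (k, l)" "J \<in> Id_states k"
      unfolding Rel_def by blast
    with P have "trans X a b (Seq (Id_k k) Q)" "(Seq (Id_k k) Q, Q) \<in> Rel"
      unfolding Rel_def using trans_closed_sort trans_Id_states Id_k_in_Id_states by (blast intro: tCut)+
    then show "\<exists>X'. trans X a b X' \<and> (Q, X') \<in> Rel\<inverse>" by blast
  qed
  moreover have "(P, Seq (Id_k k) P) \<in> Rel\<inverse>"
    unfolding Rel_def using assms Id_k_in_Id_states by blast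
  ultimately show ?thesis using sorts by (metis bisimilarI converse_converse converse_iff)
qed

definition Tw_Tw_rel :: "nat \<Rightarrow> nat \<Rightarrow> ('a trm \<times> 'a trm) set" where
  "Tw_Tw_rel k l = {(Seq W V, J) | W V J. W \<in> Tw_states k l \<and> V \<in> Tw_states l k \<and> J \<in> Id_states (k + l)}"

lemma Tw_Tw_rel_closed_sort:
  "(X, Y) \<in> Tw_Tw_rel k l \<Longrightarrow> closed_sort X (k + l, k + l) \<and> closed_sort Y (k + l, k + l)"
  unfolding Tw_Tw_rel_def by (blast intro: closed_sort_SeqI closed_sort_Tw_states closed_sort_Id_states)

lemma simulates_Tw_Tw_rel: "simulates (Tw_Tw_rel k l)"
proof (rule simulatesI_compound)
  fix W V Y a c b W' V'
  assume "(Seq W V, Y) \<in> Tw_Tw_rel k l" and W: "trans W a c W'" and V: "trans V c b V'"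
  then have states: "W \<in> Tw_states k l" "V \<in> Tw_states l k" "Y \<in> Id_states (k + l)"
    unfolding Tw_Tw_rel_def by blast+
  from Tw_states_trans[OF W states(1)] obtain a1 a2 where W': "W' \<in> Tw_states k l"
    and a: "a = a1 @ a2" "c = a2 @ a1" "length a1 = k" "length a2 = l" by blast
  from Tw_states_trans[OF V states(2)] obtain c1 c2 where V': "V' \<in> Tw_states l k"
    and c: "c = c1 @ c2" "b = c2 @ c1" "length c1 = l" by blast
  from a c have "b = a" by auto
  with a states(3) have "trans Y a b (Id_k (k + l))" by (simp add: trans_Id_states)
  moreover have "(Seq W' V', Id_k (k + l)) \<in> Tw_Tw_rel k l"
    unfolding Tw_Tw_rel_def using W' V' Id_k_in_Id_states by blast
  ultimately show "\<exists>Y'. trans Y a b Y' \<and> (Seq W' V', Y') \<in> Tw_Tw_rel k l" by blast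
qed (blast dest: Tw_Tw_rel_closed_sort, auto simp: Tw_Tw_rel_def)

lemma simulates_converse_Tw_Tw_rel: "simulates ((Tw_Tw_rel k l)\<inverse>)"
proof (rule simulatesI)
  fix J X a b J'
  assume "(J, X) \<in> (Tw_Tw_rel k l)\<inverse>" and J: "trans J a b J'"
  then obtain W V where X: "X = Seq W V" "W \<in> Tw_states k l" "V \<in> Tw_states l k"
    and "J \<in> Id_states (k + l)" unfolding Tw_Tw_rel_def by blast
  with J have J': "J' \<in> Id_states (k + l)" and "b = a" "length a = k + l"
    using Id_states_trans by blast+
  then have "a = take k a @ drop k a" "b = take k a @ drop k a"
    "length (take k a) = k" "length (drop k a) = l" by simp_all
  with X have "trans X a b (Seq (Tw k l) (Tw l k))"
    by (metis tCut trans_Tw_states)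
  moreover have "(Seq (Tw k l) (Tw l k), J') \<in> Tw_Tw_rel k l"
    unfolding Tw_Tw_rel_def using J' Tw_in_Tw_states by blast
  ultimately show "\<exists>X'. trans X a b X' \<and> (J', X') \<in> (Tw_Tw_rel k l)\<inverse>" by blast
qed

lemma Tw_Tw_bisimilar: "Seq (Tw k l) (Tw l k) \<approx> (Id_k (k + l) :: 'a trm)"
proof -
  have "(Seq (Tw k l) (Tw l k), Id_k (k + l) :: 'a trm) \<in> Tw_Tw_rel k l"
    unfolding Tw_Tw_rel_def using Tw_in_Tw_states Id_k_in_Id_states by blast
  with Tw_Tw_rel_closed_sort[OF this] show ?thesis
    by (blast intro: bisimilarI simulates_Tw_Tw_rel simulates_converse_Tw_Tw_rel)
qed

definition Tw_natural_rel :: "nat \<Rightarrow> nat \<Rightarrow> nat \<Rightarrow> nat \<Rightarrow> ('a trm \<times> 'a trm) set" where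
  "Tw_natural_rel k l m n = {(Seq (Ten P R) W, Seq V (Ten R P)) | P R W V.
     closed_sort P (k, l) \<and> closed_sort R (m, n) \<and> W \<in> Tw_states l n \<and> V \<in> Tw_states k m}"

lemma Tw_natural_rel_closed_sort:
  "(X, Y) \<in> Tw_natural_rel k l m n \<Longrightarrow> closed_sort X (k + m, n + l) \<and> closed_sort Y (k + m, n + l)"
  unfolding Tw_natural_rel_def by (blast intro: closed_sort_SeqI closed_sort_TenI closed_sort_Tw_states)

lemma simulates_Tw_natural_rel: "simulates (Tw_natural_rel k l m n)"
proof (rule simulatesI_compound)
  fix P0 W Y a c b Q0 W'
  assume "(Seq P0 W, Y) \<in> Tw_natural_rel k l m n" and P0: "trans P0 a c Q0" and W: "trans W c b W'"
  then obtain P R V where eq: "P0 = Ten P R" "Y = Seq V (Ten R P)"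
    and sort: "closed_sort P (k, l)" "closed_sort R (m, n)"
    and states: "W \<in> Tw_states l n" "V \<in> Tw_states k m"
    unfolding Tw_natural_rel_def by blast
  from P0 obtain a1 a2 c1 c2 P' R' where a: "a = a1 @ a2" and c: "c = c1 @ c2" and Q0: "Q0 = Ten P' R'"
    and PR: "trans P a1 c1 P'" "trans R a2 c2 R'"
    unfolding eq by (rule trans_TenE)
  from PR sort have sort': "closed_sort P' (k, l)" "closed_sort R' (m, n)"
    and len: "length a1 = k" "length c1 = l" "length a2 = m"
    using trans_closed_sort by blast+
  from Tw_states_trans[OF W states(1)] obtain e1 e2 where W': "W' \<in> Tw_states l n"
    and "c = e1 @ e2" "b = e2 @ e1" "length e1 = l" by blast
  with c len have b: "b = c2 @ c1" by auto
  have "trans Y a b (Seq (Tw k m) (Ten R' P'))"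
    unfolding eq a b using trans_Tw_states[OF states(2) len(1,3)] PR by (blast intro: tCut tTen)
  moreover have "(Seq Q0 W', Seq (Tw k m) (Ten R' P')) \<in> Tw_natural_rel k l m n"
    unfolding Tw_natural_rel_def Q0 using sort' W' Tw_in_Tw_states by blast
  ultimately show "\<exists>Y'. trans Y a b Y' \<and> (Seq Q0 W', Y') \<in> Tw_natural_rel k l m n" by blast
qed (blast dest: Tw_natural_rel_closed_sort, auto simp: Tw_natural_rel_def)

lemma simulates_converse_Tw_natural_rel: "simulates ((Tw_natural_rel k l m n)\<inverse>)"
proof (rule simulatesI_compound)
  fix V R0 X a c b V' S0
  assume "(Seq V R0, X) \<in> (Tw_natural_rel k l m n)\<inverse>" and V: "trans V a c V'" and R0: "trans R0 c b S0"
  then obtain P R W where eq: "R0 = Ten R P" "X = Seq (Ten P R) W"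
    and sort: "closed_sort P (k, l)" "closed_sort R (m, n)"
    and states: "W \<in> Tw_states l n" "V \<in> Tw_states k m"
    unfolding Tw_natural_rel_def by blast
  from Tw_states_trans[OF V states(2)] obtain a1 a2 where V': "V' \<in> Tw_states k m"
    and a: "a = a1 @ a2" "c = a2 @ a1" "length a1 = k" "length a2 = m" by blast
  from R0 obtain c1 c2 b1 b2 R' P' where c: "c = c1 @ c2" and b: "b = b1 @ b2" and S0: "S0 = Ten R' P'"
    and RP: "trans R c1 b1 R'" "trans P c2 b2 P'"
    unfolding eq by (rule trans_TenE)
  from RP sort have sort': "closed_sort R' (m, n)" "closed_sort P' (k, l)"
    and len: "length c1 = m" "length b1 = n" "length b2 = l"
    using trans_closed_sort by blast+
  from a c len have "c1 = a2" "c2 = a1" by auto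
  with RP have "trans (Ten P R) a (b2 @ b1) (Ten P' R')" unfolding a by (blast intro: tTen)
  then have "trans X a b (Seq (Ten P' R') (Tw l n))"
    unfolding eq b using trans_Tw_states[OF states(1) len(3,2)] by (blast intro: tCut)
  moreover have "(Seq V' S0, Seq (Ten P' R') (Tw l n)) \<in> (Tw_natural_rel k l m n)\<inverse>"
    unfolding Tw_natural_rel_def S0 using sort' V' Tw_in_Tw_states by blast
  ultimately show "\<exists>X'. trans X a b X' \<and> (Seq V' S0, X') \<in> (Tw_natural_rel k l m n)\<inverse>" by blast
qed (blast dest: Tw_natural_rel_closed_sort, auto simp: Tw_natural_rel_def)

lemma Tw_natural_bisimilar:
  assumes "closed_sort P (k, l)" "closed_sort R (m, n)"
  shows "Seq (Ten P R) (Tw l n) \<approx> Seq (Tw k m) (Ten R P)"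
proof -
  have "(Seq (Ten P R) (Tw l n), Seq (Tw k m) (Ten R P)) \<in> Tw_natural_rel k l m n"
    unfolding Tw_natural_rel_def using assms Tw_in_Tw_states by blast
  with Tw_natural_rel_closed_sort[OF this] show ?thesis
    by (blast intro: bisimilarI simulates_Tw_natural_rel simulates_converse_Tw_natural_rel)
qed

theorem mainTheorem3:
  fixes P Q R S T :: "'a trm" and k l m n u v :: nat
  assumes "closed_sort P (k, l)" and "closed_sort Q (l, m)" and "closed_sort R (m, n)"
    and "closed_sort S (n, u)" and "closed_sort T (u, v)"
  shows "(Seq (Seq P Q) R \<approx> Seq P (Seq Q R))
    \<and> (Seq P (Id_k l) \<approx> P \<and> P \<approx> Seq (Id_k k) P)
    \<and> (Ten (Ten P R) T \<approx> Ten P (Ten R T))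
    \<and> (Seq (Ten P S) (Ten Q T) \<approx> Ten (Seq P Q) (Seq S T))
    \<and> (Seq (Ten P R) (Tw l n) \<approx> Seq (Tw k m) (Ten R P))
    \<and> (Seq (Tw k l) (Tw l k) \<approx> (Id_k (k + l) :: 'a trm))"
  using Seq_assoc_bisimilar[OF assms(1-3)] Seq_Id_bisimilar[OF assms(1)] Id_Seq_bisimilar[OF assms(1)]
    Ten_assoc_bisimilar[OF assms(1,3,5)] interchange_bisimilar[OF assms(1,2,4,5)]
    Tw_natural_bisimilar[OF assms(1,3)] Tw_Tw_bisimilar[of k l]
  by blast

end
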